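(* Let $\mathcal D=\mathcal Z=\{0,1\}$ and suppose that $$4\,f_{0,0}(y_0)\,f_{1,1}(y_1)>\Big(\frac{\overline\lambda}{\underline\lambda}\Big)^{p+1}\big(f_{0,1}(y_0)+f_{1,0}(y_1)\big)^2$$ holds for Lebesgue-almost all $(y_0,y_1)\in\mathcal Y_0\times\mathcal Y_1$. Then for $\mu$-almost all $u\in\mathcal U$ and all $(\xi_0,\xi_1)\in\mathbb R^{p\times2}\setminus\{0\}$, $$\sum_{d\in\mathcal D,\,z\in\mathcal Z}f_{d,z}(q_d^\ast(u))\det(Dq_d^\ast(u))\,\xi_z^\top(Dq_d^\ast(u))^{-1}\xi_d>0.$$
   Context: $\mathcal U\subset\mathbb R^p$ compact convex with piecewise $C^1$ boundary; $\mu$ a probability measure with support $\mathcal U$, absolutely continuous w.r.t. Lebesgue measure. $f_{d,z}\ge0$ are the functions $f_{d,z}(y):=\frac{\partial^p}{\partial y_1\cdots\partial y_p}\mathbb P(Y\le y,D=d\mid Z=z)$ for observed $(Y,D,Z)$. For fixed constants $\overline\lambda>\underline\lambda>0$, $q_d^\ast:\mathcal U\to\mathbb R^p$ ($d=0,1$) are $C^2$ with $Dq_d^\ast$ symmetric positive definite and all eigenvalues in $(\underline\lambda,\overline\lambda)$, $q_d^\ast(\mathcal U)=\mathcal Y_d$, and the pushforward of $\mu$ under $q_d^\ast$ is the law of $Y_d$ (so that $\mathcal Y_d$ is the support of $Y_d$ and $\mu$-null sets correspond to Lebesgue-null sets of $\mathcal Y_d$ under $q_d^\ast$). *)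

theory Defs
  imports "HOL-Probability.Probability"
begin

definition measure_support :: "('a::metric_space) measure \<Rightarrow> 'a set" where
  "measure_support M = {x. \<forall>e>0. emeasure M (ball x e) > 0}"

definition C1_within :: "('a::euclidean_space) set \<Rightarrow> ('a \<Rightarrow> real) \<Rightarrow> bool" where
  "C1_within U g \<longleftrightarrow> (\<exists>G. (\<forall>u\<in>U. (g has_derivative (\<lambda>h. G u \<bullet> h)) (at u within U))
                         \<and> continuous_on U G)"

definition C2_with_jacobian ::
  "(real^'n) set \<Rightarrow> (real^'n \<Rightarrow> real^'n) \<Rightarrow> (real^'n \<Rightarrow> real^'n^'n) \<Rightarrow> bool" where
  "C2_with_jacobian U q Dq \<longleftrightarrow>
     (\<forall>u\<in>U. (q has_derivative (\<lambda>h. Dq u *v h)) (at u within U))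
     \<and> (\<forall>i j. C1_within U (\<lambda>u. Dq u $ i $ j))"

definition is_eigenvalue :: "real^'n^'n \<Rightarrow> real \<Rightarrow> bool" where
  "is_eigenvalue A c \<longleftrightarrow> (\<exists>v. v \<noteq> 0 \<and> A *v v = c *\<^sub>R v)"

end

theory Submission
  imports Defs
begin

text \<open>Fix \<open>u\<close> and write \<open>A = Dq 0 u\<close>, \<open>B = Dq 1 u\<close>. In the quadratic form in
  \<open>(\<xi> 0, \<xi> 1)\<close> the cross terms are bounded by Cauchy-Schwarz for the positive definite
  matrices \<open>A\<inverse>\<close> and \<open>B\<inverse>\<close>, and the spectral bounds make \<open>det A * (x \<bullet> A\<inverse> x)\<close> and
  \<open>det B * (x \<bullet> B\<inverse> x)\<close> comparable up to the factor \<open>(lam_hi / lam_lo) ^ (p + 1)\<close>.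
  By AM-GM the form is therefore positive whenever the assumed inequality holds at the
  diagonal point \<open>(q 0 u, q 1 u)\<close>. That inequality is only assumed almost everywhere on
  pairs, but its failure set on the diagonal is covered by countably many product sets cut
  out by rational thresholds; by Fubini a null product set has a null side, and null sets
  of \<open>q d ` U\<close> pull back under \<open>q d\<close> to \<open>\<mu>\<close>-null sets.\<close>

lemma inner_matrix_vector_transpose:
  fixes M :: "real^'n^'m"
  shows "(M *v x) \<bullet> y = x \<bullet> (transpose M *v y)"
  by (metis dot_lmul_matrix vector_transpose_matrix)

lemma symmetric_matrix_inner_commute:
  fixes A :: "real^'n^'n"
  assumes "transpose A = A"
  shows "(A *v x) \<bullet> y = x \<bullet> (A *v y)"
  using inner_matrix_vector_transpose[of A x y] assms by simp

lemma quadratic_form_add_scaleR: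
  fixes A :: "real^'n^'n"
  assumes "transpose A = A"
  shows "(x + t *\<^sub>R w) \<bullet> (A *v (x + t *\<^sub>R w))
           = x \<bullet> (A *v x) + 2 * t * (w \<bullet> (A *v x)) + t\<^sup>2 * (w \<bullet> (A *v w))"
proof -
  have "x \<bullet> (A *v w) = w \<bullet> (A *v x)"
    using symmetric_matrix_inner_commute[OF assms, of w x] by (simp add: inner_commute)
  then show ?thesis
    by (simp add: matrix_vector_right_distrib matrix_vector_mult_scaleR inner_add_left
        inner_add_right power2_eq_square algebra_simps)
qed

lemma quadratic_form_Cauchy_Schwarz:
  fixes A :: "real^'n^'n"
  assumes sym: "transpose A = A" and pd: "\<And>v. v \<noteq> 0 \<Longrightarrow> v \<bullet> (A *v v) > 0"
  shows "(u \<bullet> (A *v v))\<^sup>2 \<le> (u \<bullet> (A *v u)) * (v \<bullet> (A *v v))"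
proof (cases "v = 0")
  case False
  define a where "a = u \<bullet> (A *v u)"
  define b where "b = v \<bullet> (A *v u)"
  define c where "c = v \<bullet> (A *v v)"
  have c: "c > 0" using pd[OF False] by (simp add: c_def)
  have "0 \<le> (u + t *\<^sub>R v) \<bullet> (A *v (u + t *\<^sub>R v))" for t
    using pd[of "u + t *\<^sub>R v"] by (cases "u + t *\<^sub>R v = 0") auto
  from this[of "- b / c"] have "0 \<le> a + 2 * (- b / c) * b + (- b / c)\<^sup>2 * c"
    unfolding quadratic_form_add_scaleR[OF sym] a_def b_def c_def .
  also have "\<dots> = a - b\<^sup>2 / c" using c by (simp add: power2_eq_square field_simps)
  finally have "b\<^sup>2 \<le> a * c" using c by (simp add: divide_le_eq)
  moreover have "u \<bullet> (A *v v) = b"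
    using symmetric_matrix_inner_commute[OF sym, of u v] by (simp add: b_def inner_commute)
  ultimately show ?thesis by (simp add: a_def c_def)
qed simp

lemma linear_le_quadratic_imp_zero:
  fixes a B :: real
  assumes "\<And>t. 2 * t * a \<le> t\<^sup>2 * B"
  shows "a = 0"
proof (rule ccontr)
  assume "a \<noteq> 0"
  then have "0 < a * a" by (auto simp: zero_less_mult_iff linorder_neq_iff)
  define d where "d = \<bar>B\<bar> + 1"
  have d: "0 < d" by (simp add: d_def)
  have "2 * (a / d) * a * d\<^sup>2 \<le> (a / d)\<^sup>2 * B * d\<^sup>2"
    by (rule mult_right_mono[OF assms]) simp
  then have "(a * a) * (2 * d) \<le> (a * a) * B"
    using d by (simp add: power2_eq_square field_simps)
  with \<open>0 < a * a\<close> have "2 * d \<le> B" using mult_le_cancel_left_pos by blast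
  then show False by (simp add: d_def)
qed

lemma Rayleigh_maximiser_orthogonal:
  fixes A :: "real^'n^'n"
  assumes sym: "transpose A = A" and vv: "v \<bullet> v = 1" and wv: "w \<bullet> v = 0"
    and max: "\<And>t. (v + t *\<^sub>R w) \<bullet> (A *v (v + t *\<^sub>R w))
                    \<le> (v \<bullet> (A *v v)) * ((v + t *\<^sub>R w) \<bullet> (v + t *\<^sub>R w))"
  shows "w \<bullet> (A *v v) = 0"
proof (rule linear_le_quadratic_imp_zero)
  fix t :: real
  have "(v + t *\<^sub>R w) \<bullet> (v + t *\<^sub>R w) = 1 + t\<^sup>2 * (w \<bullet> w)" using vv wv
    by (simp add: inner_add_left inner_add_right inner_commute power2_eq_square algebra_simps)
  with max[of t] have "v \<bullet> (A *v v) + 2 * t * (w \<bullet> (A *v v)) + t\<^sup>2 * (w \<bullet> (A *v w))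
      \<le> (v \<bullet> (A *v v)) * (1 + t\<^sup>2 * (w \<bullet> w))"
    unfolding quadratic_form_add_scaleR[OF sym] by simp
  then show "2 * t * (w \<bullet> (A *v v)) \<le> t\<^sup>2 * ((v \<bullet> (A *v v)) * (w \<bullet> w) - w \<bullet> (A *v w))"
    by (simp add: algebra_simps)
qed

text \<open>The eigenvector is a maximiser of the Rayleigh quotient on the orthogonal complement
  of \<open>S\<close>, which is \<open>A\<close>-invariant because \<open>S\<close> consists of eigenvectors.\<close>
lemma symmetric_matrix_orthogonal_eigenvector:
  fixes A :: "real^'n^'n" and S :: "(real^'n) set"
  assumes sym: "transpose A = A" and fin: "finite S" and card: "card S < CARD('n)"
    and eig: "\<And>s. s \<in> S \<Longrightarrow> \<exists>c. A *v s = c *\<^sub>R s"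
  shows "\<exists>v. norm v = 1 \<and> (\<forall>s\<in>S. v \<bullet> s = 0) \<and> (\<exists>c. A *v v = c *\<^sub>R v)"
proof -
  define W where "W = (\<Inter>s\<in>S. {x. s \<bullet> x = 0}) \<inter> sphere 0 1"
  have "dim S < DIM(real^'n)"
    using dim_le_card[OF span_superset fin] card by simp
  from orthogonal_to_subspace_exists[OF this]
  obtain x :: "real^'n" where x: "x \<noteq> 0" "\<And>y. y \<in> span S \<Longrightarrow> orthogonal x y"
    by blast
  have "sgn x \<in> W" using x unfolding W_def
    by (auto simp: norm_sgn sgn_div_norm orthogonal_def span_base inner_commute)
  then have "W \<noteq> {}" by blast
  moreover have "compact W" unfolding W_def
    by (intro closed_Int_compact closed_INT compact_sphere) (simp add: closed_hyperplane)
  moreover have "continuous_on W (\<lambda>x. x \<bullet> (A *v x))" by (intro continuous_intros)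
  ultimately obtain v where vW: "v \<in> W" and vmax: "\<And>y. y \<in> W \<Longrightarrow> y \<bullet> (A *v y) \<le> v \<bullet> (A *v v)"
    using continuous_attains_sup[of W "\<lambda>x. x \<bullet> (A *v x)"] by blast
  define lam where "lam = v \<bullet> (A *v v)"
  have nv: "norm v = 1" and vS: "\<And>s. s \<in> S \<Longrightarrow> s \<bullet> v = 0" using vW by (auto simp: W_def)
  have vv: "v \<bullet> v = 1" using nv by (simp add: power2_norm_eq_inner[symmetric])
  have max: "y \<bullet> (A *v y) \<le> lam * (y \<bullet> y)" if "\<forall>s\<in>S. s \<bullet> y = 0" for y
  proof (cases "y = 0")
    case False
    with that have "sgn y \<in> W" by (auto simp: W_def norm_sgn sgn_div_norm)
    then have "sgn y \<bullet> (A *v sgn y) \<le> lam" using vmax lam_def by blast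
    moreover have "sgn y \<bullet> (A *v sgn y) = (y \<bullet> (A *v y)) / (y \<bullet> y)"
      by (simp add: sgn_div_norm matrix_vector_mult_scaleR divide_inverse
          power2_norm_eq_inner[symmetric] power2_eq_square)
    ultimately show ?thesis using False by (simp add: divide_le_eq)
  qed simp
  define w where "w = A *v v - lam *\<^sub>R v"
  have wS: "s \<bullet> w = 0" if s: "s \<in> S" for s
  proof -
    obtain c where c: "A *v s = c *\<^sub>R s" using eig[OF s] by blast
    have "s \<bullet> (A *v v) = (A *v s) \<bullet> v" using symmetric_matrix_inner_commute[OF sym, of s v] by simp
    then show ?thesis using c vS[OF s] by (simp add: w_def inner_diff_right)
  qed
  have wv: "w \<bullet> v = 0" using vv
    by (simp add: w_def inner_diff_left lam_def inner_commute inner_diff_right)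
  have "w \<bullet> (A *v v) = 0"
  proof (rule Rayleigh_maximiser_orthogonal[OF sym vv wv])
    fix t :: real
    show "(v + t *\<^sub>R w) \<bullet> (A *v (v + t *\<^sub>R w)) \<le> (v \<bullet> (A *v v)) * ((v + t *\<^sub>R w) \<bullet> (v + t *\<^sub>R w))"
      using max[of "v + t *\<^sub>R w"] wS vS by (simp add: lam_def inner_add_right)
  qed
  then have "w \<bullet> w = 0" using wv by (simp add: w_def inner_diff_right inner_diff_left)
  then have "A *v v = lam *\<^sub>R v" by (simp add: w_def)
  moreover have "\<forall>s\<in>S. v \<bullet> s = 0" using vS by (simp add: inner_commute)
  ultimately show ?thesis using nv by blast
qed

lemma symmetric_matrix_orthonormal_eigenbasis:
  fixes A :: "real^'n^'n"
  assumes sym: "transpose A = A"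
  obtains e :: "'n \<Rightarrow> real^'n"
  where "\<And>i. norm (e i) = 1" "\<And>i. \<exists>c. A *v e i = c *\<^sub>R e i"
    "\<And>i j. i \<noteq> j \<Longrightarrow> e i \<bullet> e j = 0"
proof -
  have "\<exists>e::'n \<Rightarrow> real^'n. (\<forall>i\<in>I. norm (e i) = 1 \<and> (\<exists>c. A *v e i = c *\<^sub>R e i))
          \<and> (\<forall>i\<in>I. \<forall>j\<in>I. i \<noteq> j \<longrightarrow> e i \<bullet> e j = 0)" for I :: "'n set"
    using finite[of I]
  proof (induction I rule: finite_induct)
    case (insert i I)
    from insert.IH obtain e :: "'n \<Rightarrow> real^'n" where e1: "\<forall>i\<in>I. norm (e i) = 1 \<and> (\<exists>c. A *v e i = c *\<^sub>R e i)"
      and e2: "\<forall>i\<in>I. \<forall>j\<in>I. i \<noteq> j \<longrightarrow> e i \<bullet> e j = 0" by (elim exE conjE)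
    have "card (e ` I) < CARD('n)"
      using card_image_le[OF insert(1), of e] card_mono[of UNIV "insert i I"] insert(1,2) by simp
    then obtain v where v: "norm v = 1" "\<forall>s\<in>e ` I. v \<bullet> s = 0" "\<exists>c. A *v v = c *\<^sub>R v"
      using symmetric_matrix_orthogonal_eigenvector[OF sym finite_imageI[OF insert(1)]] e1 by blast
    define e' where "e' = e(i := v)"
    have "\<forall>j\<in>insert i I. norm (e' j) = 1 \<and> (\<exists>c. A *v e' j = c *\<^sub>R e' j)"
      using e1 v by (simp add: e'_def)
    moreover have "e' j \<bullet> e' l = 0" if "j \<in> insert i I" "l \<in> insert i I" "j \<noteq> l" for j l
      using that e2 v(2) insert(2) by (cases "j = i"; cases "l = i") (auto simp: e'_def inner_commute)
    ultimately show ?case by blast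
  qed simp
  from this[of UNIV] obtain e :: "'n \<Rightarrow> real^'n"
    where "\<forall>i. norm (e i) = 1 \<and> (\<exists>c. A *v e i = c *\<^sub>R e i)" "\<forall>i j. i \<noteq> j \<longrightarrow> e i \<bullet> e j = 0"
    by auto
  then show ?thesis by (intro that) auto
qed

lemma symmetric_matrix_diagonalization:
  fixes A :: "real^'n^'n"
  assumes sym: "transpose A = A"
  obtains P :: "real^'n^'n" and lam :: "'n \<Rightarrow> real"
  where "orthogonal_matrix P" "A = P ** (\<chi> i j. if i = j then lam i else 0) ** transpose P"
    "\<And>i. is_eigenvalue A (lam i)"
proof -
  obtain e :: "'n \<Rightarrow> real^'n" where e1: "\<And>i. norm (e i) = 1"
    and e2: "\<And>i. \<exists>c. A *v e i = c *\<^sub>R e i" and e3: "\<And>i j. i \<noteq> j \<Longrightarrow> e i \<bullet> e j = 0"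
    using symmetric_matrix_orthonormal_eigenbasis[OF sym] by blast
  define lam where "lam i = e i \<bullet> (A *v e i)" for i
  have Ae: "A *v e i = lam i *\<^sub>R e i" for i
  proof -
    obtain c where c: "A *v e i = c *\<^sub>R e i" using e2 by blast
    moreover have "e i \<bullet> e i = 1" using e1[of i] by (simp add: power2_norm_eq_inner[symmetric])
    ultimately show ?thesis by (simp add: lam_def)
  qed
  have eig: "is_eigenvalue A (lam i)" for i
    unfolding is_eigenvalue_def using Ae[of i] e1[of i] by (intro exI[of _ "e i"]) auto
  define P :: "real^'n^'n" where "P = (\<chi> r c. e c $ r)"
  have col: "column i P = e i" for i by (simp add: P_def column_def vec_eq_iff)
  have P: "orthogonal_matrix P"
    by (simp add: orthogonal_matrix_orthonormal_columns col e1 e3 orthogonal_def)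
  define D :: "real^'n^'n" where "D = (\<chi> i j. if i = j then lam i else 0)"
  have "(A ** P) $ r $ c = (P ** D) $ r $ c" for r c
  proof -
    have "(A ** P) $ r $ c = (A *v e c) $ r"
      by (simp add: P_def matrix_matrix_mult_def matrix_vector_mult_def)
    also have "\<dots> = (P ** D) $ r $ c"
      by (simp add: Ae P_def D_def matrix_matrix_mult_def if_distrib cong: if_cong)
    finally show ?thesis .
  qed
  then have "A ** P = P ** D" by (simp add: vec_eq_iff)
  then have "A = P ** D ** transpose P"
    using P by (metis matrix_mul_assoc matrix_mul_rid orthogonal_matrix_def)
  then show ?thesis using that P eig by (simp add: D_def)
qed

lemma symmetric_matrix_has_eigenvalue:
  fixes A :: "real^'n^'n"
  assumes "transpose A = A"
  shows "\<exists>c. is_eigenvalue A c"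
  using symmetric_matrix_diagonalization[OF assms] by blast

lemma eigenvalue_bounds_det:
  fixes A :: "real^'n^'n"
  assumes sym: "transpose A = A" and lo: "0 \<le> lo"
    and eig: "\<And>c. is_eigenvalue A c \<Longrightarrow> lo < c \<and> c < hi"
  shows "lo ^ CARD('n) < det A \<and> det A < hi ^ CARD('n)"
proof -
  obtain P :: "real^'n^'n" and lam where P: "orthogonal_matrix P"
    and A: "A = P ** (\<chi> i j. if i = j then lam i else 0) ** transpose P"
    and lam: "\<And>i. is_eigenvalue A (lam i)"
    using symmetric_matrix_diagonalization[OF sym] by blast
  have "det P * det (transpose P) = 1"
    using P unfolding orthogonal_matrix_def by (metis det_I det_mul)
  then have "det A = (\<Prod>i\<in>UNIV. lam i)"
    unfolding A det_mul by (simp add: det_diagonal algebra_simps)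
  moreover have "(\<Prod>i\<in>(UNIV::'n set). lo) < (\<Prod>i\<in>UNIV. lam i)"
    using eig[OF lam] lo by (intro prod_mono_strict[of undefined]) (auto intro: less_imp_le le_less_trans)
  moreover have "(\<Prod>i\<in>UNIV. lam i) < (\<Prod>i\<in>(UNIV::'n set). hi)"
    using eig[OF lam] lo by (intro prod_mono_strict[of undefined]) (auto intro: less_imp_le le_less_trans)
  ultimately show ?thesis by simp
qed

lemma eigenvalue_bounds_quadratic_form:
  fixes A :: "real^'n^'n"
  assumes sym: "transpose A = A" and eig: "\<And>c. is_eigenvalue A c \<Longrightarrow> lo < c \<and> c < hi"
    and "x \<noteq> 0"
  shows "lo * (x \<bullet> x) < x \<bullet> (A *v x) \<and> x \<bullet> (A *v x) < hi * (x \<bullet> x)"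
proof -
  obtain P :: "real^'n^'n" and lam where P: "orthogonal_matrix P"
    and A: "A = P ** (\<chi> i j. if i = j then lam i else 0) ** transpose P"
    and lam: "\<And>i. is_eigenvalue A (lam i)"
    using symmetric_matrix_diagonalization[OF sym] by blast
  define y where "y = transpose P *v x"
  have PtP: "transpose P ** P = mat 1" and PPt: "P ** transpose P = mat 1"
    using P by (simp_all add: orthogonal_matrix_def)
  have "x = P *v y"
    by (simp add: y_def matrix_vector_mul_assoc PPt del: transpose_matrix_vector)
  then have "y \<noteq> 0" using \<open>x \<noteq> 0\<close> by auto
  then obtain j where "y $ j \<noteq> 0" by (metis vec_eq_iff zero_index)
  then have j: "(y $ j)\<^sup>2 > 0" by simp
  have "x \<bullet> x = y \<bullet> y"
    unfolding \<open>x = P *v y\<close> inner_matrix_vector_transpose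
    by (simp add: matrix_vector_mul_assoc PtP del: transpose_matrix_vector)
  moreover have "x \<bullet> (A *v x) = (\<Sum>i\<in>UNIV. lam i * (y $ i)\<^sup>2)"
  proof -
    have "transpose P ** (A ** P)
            = (transpose P ** P) ** (\<chi> i j. if i = j then lam i else 0) ** (transpose P ** P)"
      unfolding A by (simp add: matrix_mul_assoc)
    then have "transpose P ** (A ** P) = (\<chi> i j. if i = j then lam i else 0)"
      by (simp add: PtP)
    then have "x \<bullet> (A *v x) = y \<bullet> ((\<chi> i j. if i = j then lam i else 0) *v y)"
      unfolding \<open>x = P *v y\<close> inner_matrix_vector_transpose
      by (simp add: matrix_vector_mul_assoc del: transpose_matrix_vector)
    also have "(\<chi> i j. if i = j then lam i else 0) *v y = (\<chi> i. lam i * y $ i)"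
      by (simp add: matrix_vector_mult_def vec_eq_iff if_distrib[of "\<lambda>z. z * _"] cong: if_cong)
    also have "y \<bullet> (\<chi> i. lam i * y $ i) = (\<Sum>i\<in>UNIV. lam i * (y $ i)\<^sup>2)"
      by (simp add: inner_vec_def power2_eq_square algebra_simps)
    finally show ?thesis .
  qed
  moreover have "y \<bullet> y = (\<Sum>i\<in>UNIV. (y $ i)\<^sup>2)" by (simp add: inner_vec_def power2_eq_square)
  moreover have "(\<Sum>i\<in>UNIV. lo * (y $ i)\<^sup>2) < (\<Sum>i\<in>UNIV. lam i * (y $ i)\<^sup>2)"
  proof (rule sum_strict_mono_ex1)
    show "\<forall>i\<in>UNIV. lo * (y $ i)\<^sup>2 \<le> lam i * (y $ i)\<^sup>2"
      using eig[OF lam] by (simp add: less_imp_le mult_right_mono)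
    show "\<exists>i\<in>UNIV. lo * (y $ i)\<^sup>2 < lam i * (y $ i)\<^sup>2"
      using eig[OF lam] j by (intro bexI[of _ j] mult_strict_right_mono) auto
  qed simp
  moreover have "(\<Sum>i\<in>UNIV. lam i * (y $ i)\<^sup>2) < (\<Sum>i\<in>UNIV. hi * (y $ i)\<^sup>2)"
  proof (rule sum_strict_mono_ex1)
    show "\<forall>i\<in>UNIV. lam i * (y $ i)\<^sup>2 \<le> hi * (y $ i)\<^sup>2"
      using eig[OF lam] by (simp add: less_imp_le mult_right_mono)
    show "\<exists>i\<in>UNIV. lam i * (y $ i)\<^sup>2 < hi * (y $ i)\<^sup>2"
      using eig[OF lam] j by (intro bexI[of _ j] mult_strict_right_mono) auto
  qed simp
  ultimately show ?thesis by (simp add: sum_distrib_left)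
qed

lemma invertible_matrix_inv:
  assumes "invertible A"
  shows "A ** matrix_inv A = mat 1" and "matrix_inv A ** A = mat 1"
  using someI_ex[OF assms[unfolded invertible_def]] unfolding matrix_inv_def by auto

lemma symmetric_matrix_inv:
  fixes A :: "real^'n^'n"
  assumes "invertible A" and sym: "transpose A = A"
  shows "transpose (matrix_inv A) = matrix_inv A"
proof -
  have "transpose (matrix_inv A) = transpose (matrix_inv A) ** (A ** matrix_inv A)"
    by (simp add: invertible_matrix_inv[OF assms(1)])
  also have "\<dots> = transpose (A ** matrix_inv A) ** matrix_inv A"
    by (simp add: matrix_transpose_mul matrix_mul_assoc sym)
  finally show ?thesis by (simp add: invertible_matrix_inv[OF assms(1)])
qed

lemma is_eigenvalue_matrix_inv:
  fixes A :: "real^'n^'n"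
  assumes "invertible A" and "is_eigenvalue (matrix_inv A) c"
  shows "c \<noteq> 0 \<and> is_eigenvalue A (inverse c)"
proof -
  obtain v where v: "v \<noteq> 0" "matrix_inv A *v v = c *\<^sub>R v"
    using assms(2) by (auto simp: is_eigenvalue_def)
  have "v = A *v (matrix_inv A *v v)"
    by (simp add: matrix_vector_mul_assoc invertible_matrix_inv[OF assms(1)])
  also have "\<dots> = c *\<^sub>R (A *v v)" by (simp add: v(2) matrix_vector_mult_scaleR)
  finally have Av: "v = c *\<^sub>R (A *v v)" .
  then have "c \<noteq> 0" using v(1) by auto
  moreover have "inverse c *\<^sub>R v = (inverse c * c) *\<^sub>R (A *v v)"
    by (metis Av scaleR_scaleR)
  ultimately have "A *v v = inverse c *\<^sub>R v" by simp
  then show ?thesis using v(1) \<open>c \<noteq> 0\<close> by (auto simp: is_eigenvalue_def)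
qed

lemma matrix_inv_eigenvalue_bounds:
  fixes A :: "real^'n^'n"
  assumes sym: "transpose A = A" and lo: "0 < lo"
    and eig: "\<And>c. is_eigenvalue A c \<Longrightarrow> lo < c \<and> c < hi"
  shows "invertible A" and "transpose (matrix_inv A) = matrix_inv A"
    and "\<And>c. is_eigenvalue (matrix_inv A) c \<Longrightarrow> inverse hi < c \<and> c < inverse lo"
proof -
  have "lo ^ CARD('n) < det A"
    using eigenvalue_bounds_det[OF sym _ eig] lo by simp
  then have "0 < det A" using zero_less_power[OF lo, of "CARD('n)"] by linarith
  then show inv: "invertible A" by (simp add: invertible_det_nz)
  show "transpose (matrix_inv A) = matrix_inv A" by (rule symmetric_matrix_inv[OF inv sym])
  fix c assume "is_eigenvalue (matrix_inv A) c"
  then have c: "lo < inverse c" "inverse c < hi"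
    using is_eigenvalue_matrix_inv[OF inv] eig by blast+
  have "0 < inverse c" using c lo by linarith
  then have "inverse hi < inverse (inverse c)"
    using c by (intro less_imp_inverse_less) simp_all
  moreover have "inverse (inverse c) < inverse lo"
    using c lo by (intro less_imp_inverse_less) simp_all
  ultimately show "inverse hi < c \<and> c < inverse lo" by simp
qed

lemma matrix_inv_quadratic_form_bounds:
  fixes A :: "real^'n^'n"
  assumes sym: "transpose A = A" and lo: "0 < lo"
    and eig: "\<And>c. is_eigenvalue A c \<Longrightarrow> lo < c \<and> c < hi" and "x \<noteq> 0"
  shows "0 < x \<bullet> (matrix_inv A *v x)"
    and "x \<bullet> x / hi < x \<bullet> (matrix_inv A *v x)" and "x \<bullet> (matrix_inv A *v x) < x \<bullet> x / lo"
proof -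
  show lower: "x \<bullet> x / hi < x \<bullet> (matrix_inv A *v x)"
    and "x \<bullet> (matrix_inv A *v x) < x \<bullet> x / lo"
    using eigenvalue_bounds_quadratic_form[OF matrix_inv_eigenvalue_bounds(2,3)[OF sym lo eig] \<open>x \<noteq> 0\<close>]
    by (simp_all add: field_simps)
  obtain c where "is_eigenvalue A c" using symmetric_matrix_has_eigenvalue[OF sym] ..
  then have "0 < hi" using eig lo by fastforce
  then have "0 < x \<bullet> x / hi" using \<open>x \<noteq> 0\<close> by simp
  with lower show "0 < x \<bullet> (matrix_inv A *v x)" by linarith
qed

lemma matrix_inv_Cauchy_Schwarz:
  fixes A :: "real^'n^'n"
  assumes sym: "transpose A = A" and lo: "0 < lo"
    and eig: "\<And>c. is_eigenvalue A c \<Longrightarrow> lo < c \<and> c < hi"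
  shows "(u \<bullet> (matrix_inv A *v v))\<^sup>2 \<le> (u \<bullet> (matrix_inv A *v u)) * (v \<bullet> (matrix_inv A *v v))"
  using quadratic_form_Cauchy_Schwarz[OF matrix_inv_eigenvalue_bounds(2)[OF sym lo eig]
      matrix_inv_quadratic_form_bounds(1)[OF sym lo eig]] .

lemma det_matrix_inv_form_comparison:
  fixes A B :: "real^'n^'n"
  assumes symA: "transpose A = A" and symB: "transpose B = B" and lo: "0 < lo"
    and eigA: "\<And>c. is_eigenvalue A c \<Longrightarrow> lo < c \<and> c < hi"
    and eigB: "\<And>c. is_eigenvalue B c \<Longrightarrow> lo < c \<and> c < hi" and x: "x \<noteq> 0"
  shows "det A * (x \<bullet> (matrix_inv A *v x))
           < (hi / lo) ^ (CARD('n) + 1) * (det B * (x \<bullet> (matrix_inv B *v x)))"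
proof -
  let ?n = "CARD('n)" and ?s = "x \<bullet> x"
  obtain c where "is_eigenvalue A c" using symmetric_matrix_has_eigenvalue[OF symA] ..
  then have hi: "0 < hi" using eigA lo by fastforce
  have s: "0 < ?s" using x by simp
  have "lo ^ ?n < det B" using eigenvalue_bounds_det[OF symB _ eigB] lo by simp
  moreover have "0 < lo ^ ?n" using lo by simp
  ultimately have dB: "0 < det B" by linarith
  have "det A * (x \<bullet> (matrix_inv A *v x)) < hi ^ ?n * (?s / lo)"
    using eigenvalue_bounds_det[OF symA _ eigA] matrix_inv_quadratic_form_bounds[OF symA lo eigA x] lo hi
    by (intro mult_strict_mono) auto
  also have "\<dots> = (hi / lo) ^ (?n + 1) * (lo ^ ?n * (?s / hi))"
    using lo hi by (simp add: power_divide field_simps)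
  also have "\<dots> < (hi / lo) ^ (?n + 1) * (det B * (x \<bullet> (matrix_inv B *v x)))"
    using eigenvalue_bounds_det[OF symB _ eigB] matrix_inv_quadratic_form_bounds[OF symB lo eigB x]
      dB lo hi s
    by (intro mult_strict_left_mono mult_strict_mono) auto
  finally show ?thesis .
qed

text \<open>AM-GM gives \<open>(a + b) \<surd>(k m n) \<le> g m + h n\<close>, which dominates the cross terms.\<close>
lemma cross_terms_dominated:
  fixes g h a b m m' n n' k :: real
  assumes g: "0 < g" and h: "0 < h" and a: "0 \<le> a" and b: "0 \<le> b" and k: "0 < k"
    and gh: "k * (a + b)\<^sup>2 \<le> 4 * g * h" and m: "0 < m" and n: "0 < n"
    and m': "m'\<^sup>2 < k * m * n" and n': "n'\<^sup>2 < k * m * n"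
  shows "0 < g * m + a * m' + b * n' + h * n"
proof -
  define T where "T = sqrt (k * m * n)"
  have kmn: "0 < k * m * n" using k m n by simp
  have TT: "T\<^sup>2 = k * m * n" using kmn by (simp add: T_def)
  have m'T: "\<bar>m'\<bar> < T" and n'T: "\<bar>n'\<bar> < T"
    unfolding T_def using m' n' by (metis real_sqrt_abs real_sqrt_less_mono)+
  have "((a + b) * T)\<^sup>2 = k * (a + b)\<^sup>2 * (m * n)"
    by (simp only: power_mult_distrib TT) (simp add: algebra_simps)
  also have "\<dots> \<le> 4 * g * h * (m * n)" using gh m n by (intro mult_right_mono) simp_all
  also have "\<dots> \<le> (g * m + h * n)\<^sup>2"
  proof -
    have "(g * m + h * n)\<^sup>2 = (g * m - h * n)\<^sup>2 + 4 * g * h * (m * n)"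
      by (simp add: power2_eq_square algebra_simps)
    then show ?thesis using zero_le_power2[of "g * m - h * n"] by linarith
  qed
  finally have "(a + b) * T \<le> g * m + h * n"
    by (rule power2_le_imp_le) (use g h m n in simp)
  moreover have "- (a * m') \<le> a * \<bar>m'\<bar>"
    using abs_ge_minus_self[of "a * m'"] a by (simp add: abs_mult)
  moreover have "- (b * n') \<le> b * \<bar>n'\<bar>"
    using abs_ge_minus_self[of "b * n'"] b by (simp add: abs_mult)
  moreover have "0 < g * m" "0 < h * n" using g h m n by simp_all
  moreover have "a * \<bar>m'\<bar> + b * \<bar>n'\<bar> < (a + b) * T \<or> a = 0 \<and> b = 0"
  proof (cases "a = 0 \<and> b = 0")
    case False
    have "a * \<bar>m'\<bar> \<le> a * T" "b * \<bar>n'\<bar> \<le> b * T"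
      using m'T n'T a b by (simp_all add: mult_left_mono)
    moreover have "a * \<bar>m'\<bar> < a * T \<or> b * \<bar>n'\<bar> < b * T"
      using False m'T n'T a b by (cases "0 < a") simp_all
    ultimately show ?thesis by (simp add: distrib_right) linarith
  qed simp
  ultimately show ?thesis by auto
qed

lemma inverse_forms_combination_pos:
  fixes A B :: "real^'n^'n" and x y :: "real^'n"
  assumes symA: "transpose A = A" and symB: "transpose B = B" and lo: "0 < lo"
    and eigA: "\<And>c. is_eigenvalue A c \<Longrightarrow> lo < c \<and> c < hi"
    and eigB: "\<And>c. is_eigenvalue B c \<Longrightarrow> lo < c \<and> c < hi"
    and g: "0 < g" and h: "0 < h" and a: "0 \<le> a" and b: "0 \<le> b"
    and gh: "(hi / lo) ^ (CARD('n) + 1) * (a + b)\<^sup>2 \<le> 4 * g * h"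
    and nz: "x \<noteq> 0 \<or> y \<noteq> 0"
  shows "0 < g * det A * (x \<bullet> (matrix_inv A *v x)) + a * det A * (y \<bullet> (matrix_inv A *v x))
           + b * det B * (x \<bullet> (matrix_inv B *v y)) + h * det B * (y \<bullet> (matrix_inv B *v y))"
proof -
  let ?k = "(hi / lo) ^ (CARD('n) + 1)"
  have "lo ^ CARD('n) < det A" "lo ^ CARD('n) < det B"
    using eigenvalue_bounds_det[OF symA _ eigA] eigenvalue_bounds_det[OF symB _ eigB] lo by simp_all
  with zero_less_power[OF lo, of "CARD('n)"] have dA: "0 < det A" and dB: "0 < det B"
    by linarith+
  have posA: "0 < z \<bullet> (matrix_inv A *v z)" and posB: "0 < z \<bullet> (matrix_inv B *v z)"
    if "z \<noteq> 0" for z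
    using matrix_inv_quadratic_form_bounds(1)[OF symA lo eigA that]
      matrix_inv_quadratic_form_bounds(1)[OF symB lo eigB that] by simp_all
  obtain c where "is_eigenvalue A c" using symmetric_matrix_has_eigenvalue[OF symA] ..
  then have "0 < hi" using eigA lo by fastforce
  then have k: "0 < ?k" using lo by simp
  consider "y = 0" | "x = 0" | "x \<noteq> 0" "y \<noteq> 0" by blast
  then show ?thesis
  proof cases
    case 1
    then show ?thesis using nz g dA posA[of x] by simp
  next
    case 2
    then show ?thesis using nz h dB posB[of y] by simp
  next
    case 3
    define m where "m = det A * (x \<bullet> (matrix_inv A *v x))"
    define m' where "m' = det A * (y \<bullet> (matrix_inv A *v x))"
    define n where "n = det B * (y \<bullet> (matrix_inv B *v y))"
    define n' where "n' = det B * (x \<bullet> (matrix_inv B *v y))"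
    have m: "0 < m" and n: "0 < n" using dA dB posA[OF 3(1)] posB[OF 3(2)] by (simp_all add: m_def n_def)
    have "m'\<^sup>2 \<le> (det A * (y \<bullet> (matrix_inv A *v y))) * m"
      unfolding m'_def m_def using matrix_inv_Cauchy_Schwarz[OF symA lo eigA, of y x] dA
      by (simp add: power_mult_distrib power2_eq_square mult_left_mono algebra_simps)
    also have "\<dots> < ?k * n * m"
      using det_matrix_inv_form_comparison[OF symA symB lo eigA eigB 3(2)] m
      by (intro mult_strict_right_mono) (simp_all add: n_def)
    finally have m': "m'\<^sup>2 < ?k * m * n" by (simp add: ac_simps)
    have "n'\<^sup>2 \<le> (det B * (x \<bullet> (matrix_inv B *v x))) * n"
      unfolding n'_def n_def using matrix_inv_Cauchy_Schwarz[OF symB lo eigB, of x y] dB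
      by (simp add: power_mult_distrib power2_eq_square mult_left_mono algebra_simps)
    also have "\<dots> < ?k * m * n"
      using det_matrix_inv_form_comparison[OF symB symA lo eigB eigA 3(1)] n
      by (intro mult_strict_right_mono) (simp_all add: m_def)
    finally have n': "n'\<^sup>2 < ?k * m * n" .
    have "0 < g * m + a * m' + b * n' + h * n"
      by (rule cross_terms_dominated[OF g h a b k gh m n m' n'])
    then show ?thesis by (simp add: m_def m'_def n_def n'_def mult.assoc)
  qed
qed

lemma AE_in_measure_support:
  fixes M :: "'a::{metric_space, second_countable_topology} measure"
  assumes sets: "sets M = sets borel"
  shows "AE x in M. x \<in> measure_support M"
proof -
  define F where "F = {ball x e | x e. e > 0 \<and> emeasure M (ball x e) = 0}"
  obtain F' where F': "F' \<subseteq> F" "countable F'" "\<Union>F' = \<Union>F"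
    using Lindelof[of F] by (auto simp: F_def)
  have "\<Union>F' \<in> null_sets M"
  proof (rule null_sets_UN'[OF F'(2), of id, simplified])
    fix B assume "B \<in> F'"
    then obtain x e where "B = ball x e" "emeasure M (ball x e) = 0" using F' by (auto simp: F_def)
    then show "B \<in> null_sets M" using sets by (simp add: null_sets_def)
  qed
  moreover have "- measure_support M \<subseteq> \<Union>F"
    by (force simp: F_def measure_support_def not_less)
  ultimately show ?thesis using F'(3) by (auto intro!: AE_I')
qed

lemma AE_pair_rectangle:
  assumes "sigma_finite_measure M" "sigma_finite_measure N"
    and P: "AE z in M \<Otimes>\<^sub>M N. P z" and XY: "\<And>x y. x \<in> X \<Longrightarrow> y \<in> Y \<Longrightarrow> \<not> P (x, y)"
  shows "(AE x in M. x \<notin> X) \<or> (AE y in N. y \<notin> Y)"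
proof (cases "AE x in M. x \<notin> X")
  case False
  interpret pair_sigma_finite M N using assms(1,2) by (rule pair_sigma_finite.intro)
  have "AE x in M. AE y in N. P (x, y)" using AE_pair[OF P] .
  with False obtain x where "x \<in> X" "AE y in N. P (x, y)"
    by (metis (mono_tags, lifting) eventually_mono)
  then have "AE y in N. y \<notin> Y" using XY by (auto elim: eventually_mono)
  then show ?thesis ..
qed simp

lemma AE_not_in_if_null_image:
  fixes \<phi> :: "'a::topological_space \<Rightarrow> 'b::euclidean_space"
  assumes sets: "sets M = sets borel" and U: "U \<in> sets borel" and cont: "continuous_on U \<phi>"
    and null: "\<And>A. A \<in> sets M \<Longrightarrow> A \<subseteq> U \<Longrightarrow> \<phi> ` A \<in> null_sets lebesgue \<Longrightarrow> A \<in> null_sets M"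
    and XU: "X \<subseteq> U" and AE_X: "AE y in lborel. y \<notin> \<phi> ` X"
  shows "AE x in M. x \<notin> X"
proof -
  obtain Z where Z: "Z \<in> null_sets lborel" "\<phi> ` X \<subseteq> Z"
    using AE_X by (auto elim!: AE_E simp: null_sets_def)
  define A where "A = \<phi> -` Z \<inter> U"
  have "\<phi> -` Z \<inter> space (restrict_space borel U) \<in> sets (restrict_space borel U)"
    using null_setsD2[OF Z(1)] borel_measurable_continuous_on_restrict[OF cont]
    by (intro measurable_sets) simp_all
  then have "A \<in> sets M" using U sets by (simp add: A_def sets_restrict_space_iff)
  moreover have "\<phi> ` A \<in> null_sets lebesgue"
    by (rule null_sets_completion_subset[OF _ null_sets_completionI[OF Z(1)]]) (auto simp: A_def)
  ultimately have "A \<in> null_sets M" by (intro null) (auto simp: A_def)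
  moreover have "X \<subseteq> A" using XU Z(2) by (auto simp: A_def)
  ultimately show ?thesis by (auto intro: AE_I')
qed

lemma AE_not_in_rectangle_of_null_images:
  fixes \<phi> \<psi> :: "'a \<Rightarrow> 'b::euclidean_space"
  assumes AE: "AE z in (lborel :: ('b \<times> 'b) measure). P (fst z) (snd z)"
    and \<phi>: "\<And>X. X \<subseteq> U \<Longrightarrow> AE y in lborel. y \<notin> \<phi> ` X \<Longrightarrow> AE u in M. u \<notin> X"
    and \<psi>: "\<And>Y. Y \<subseteq> U \<Longrightarrow> AE y in lborel. y \<notin> \<psi> ` Y \<Longrightarrow> AE u in M. u \<notin> Y"
    and XY: "X \<subseteq> U" "Y \<subseteq> U" "\<And>u v. u \<in> X \<Longrightarrow> v \<in> Y \<Longrightarrow> \<not> P (\<phi> u) (\<psi> v)"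
  shows "(AE u in M. u \<notin> X) \<or> (AE v in M. v \<notin> Y)"
proof -
  have "(AE y in lborel. y \<notin> \<phi> ` X) \<or> (AE y in lborel. y \<notin> \<psi> ` Y)"
  proof (rule AE_pair_rectangle[OF sigma_finite_lborel sigma_finite_lborel])
    show "AE z in lborel \<Otimes>\<^sub>M lborel. P (fst z) (snd z)" unfolding lborel_prod by (rule AE)
  qed (use XY(3) in auto)
  then show ?thesis using \<phi> \<psi> XY(1,2) by blast
qed

lemma rational_thresholds_witness:
  fixes g h a b k :: real
  assumes g: "0 \<le> g" and h: "0 < h" and a: "0 \<le> a" and b: "0 \<le> b" and k: "0 < k"
    and lt: "4 * g * h < k * (a + b)\<^sup>2"
  obtains r s where "r \<in> \<rat>" "s \<in> \<rat>" "0 \<le> s" "g \<le> r" "s \<le> a" "4 * r * h < k * (s + b)\<^sup>2"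
proof -
  define c where "c = sqrt (4 * g * h / k)"
  have c: "0 \<le> c" "c\<^sup>2 = 4 * g * h / k" using g h k by (simp_all add: c_def)
  have "4 * g * h / k < (a + b)\<^sup>2" using lt k by (simp add: pos_divide_less_eq mult.commute)
  then have "c < a + b" unfolding c_def using a b
    by (metis abs_of_nonneg add_nonneg_nonneg real_sqrt_abs real_sqrt_less_mono)
  obtain s where s: "s \<in> \<rat>" "0 \<le> s" "s \<le> a" "c < s + b"
  proof (cases "c < b")
    case True
    then show ?thesis using that[of 0] a by simp
  next
    case False
    obtain s where "s \<in> \<rat>" "c - b < s" "s < a"
      using Rats_dense_in_real \<open>c < a + b\<close> by (metis diff_less_eq)
    then show ?thesis using that[of s] False by simp
  qed
  have "c\<^sup>2 < (s + b)\<^sup>2" using s(4) c(1) by (intro power_strict_mono) simp_all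
  then have "g < k * (s + b)\<^sup>2 / (4 * h)"
    using c(2) h k by (simp add: field_simps)
  then obtain r where "r \<in> \<rat>" "g < r" "r < k * (s + b)\<^sup>2 / (4 * h)"
    using Rats_dense_in_real by blast
  then show ?thesis using that[of r s] s h by (simp add: pos_less_divide_eq mult.commute mult.left_commute)
qed

text \<open>Off a null set, a diagonal point \<open>u\<close> violating the inequality lies in some
  \<open>P r s \<inter> Q r s\<close> with rational thresholds \<open>r, s\<close> (see the proof); since every pair in
  \<open>P r s \<times> Q r s\<close> violates it, one of the two sides is null.\<close>
lemma AE_diagonal_of_AE_rectangles:
  fixes g a h b :: "'a \<Rightarrow> real"
  assumes nonneg: "\<And>u. u \<in> U \<Longrightarrow> 0 \<le> g u \<and> 0 \<le> a u \<and> 0 \<le> h u \<and> 0 \<le> b u"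
    and k: "0 < k" and AE_U: "AE u in M. u \<in> U" and nontrivial: "\<not> (AE u in M. False)"
    and rect: "\<And>X Y. X \<subseteq> U \<Longrightarrow> Y \<subseteq> U
      \<Longrightarrow> (\<And>u v. u \<in> X \<Longrightarrow> v \<in> Y \<Longrightarrow> \<not> k * (a u + b v)\<^sup>2 < 4 * g u * h v)
      \<Longrightarrow> (AE u in M. u \<notin> X) \<or> (AE v in M. v \<notin> Y)"
  shows "AE u in M. u \<in> U \<and> 0 < g u \<and> 0 < h u \<and> k * (a u + b u)\<^sup>2 \<le> 4 * g u * h u"
proof -
  have U: "\<not> (AE u in M. u \<notin> U)"
  proof
    assume "AE u in M. u \<notin> U"
    with AE_U have "AE u in M. False" by eventually_elim simp
    with nontrivial show False ..
  qed
  have k_sq: "\<not> k * x\<^sup>2 < 0" for x using k by (simp add: not_less)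
  have "AE u in M. u \<notin> {u \<in> U. g u = 0}"
    using rect[of "{u \<in> U. g u = 0}" U] U k_sq by auto
  moreover have "AE u in M. u \<notin> {u \<in> U. h u = 0}"
    using rect[of U "{u \<in> U. h u = 0}"] U k_sq by auto
  moreover define P where "P r s = {u \<in> U. g u \<le> r \<and> s \<le> a u}" for r s :: real
  define Q where "Q r s = {v \<in> U. 4 * r * h v < k * (s + b v)\<^sup>2}" for r s :: real
  have "AE u in M. u \<notin> P r s \<inter> Q r s" if s: "0 \<le> s" for r s
  proof -
    have "\<not> k * (a u + b v)\<^sup>2 < 4 * g u * h v" if "u \<in> P r s" "v \<in> Q r s" for u v
    proof -
      have "4 * g u * h v \<le> 4 * r * h v"
        using that nonneg[of v] by (auto simp: P_def Q_def intro!: mult_right_mono)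
      also have "\<dots> < k * (s + b v)\<^sup>2" using that by (simp add: Q_def)
      also have "\<dots> \<le> k * (a u + b v)\<^sup>2"
        using that nonneg s k by (intro mult_left_mono power_mono) (auto simp: P_def Q_def)
      finally show ?thesis by simp
    qed
    then show ?thesis using rect[of "P r s" "Q r s"] by (auto simp: P_def Q_def elim: eventually_mono)
  qed
  then have "AE u in M. \<forall>r\<in>\<rat>. \<forall>s\<in>\<rat>. 0 \<le> s \<longrightarrow> u \<notin> P r s \<inter> Q r s"
    by (simp add: AE_ball_countable countable_rat)
  ultimately show ?thesis using AE_U
  proof eventually_elim
    case (elim u)
    then have g: "0 < g u" and h: "0 < h u" using nonneg[of u] by auto
    show ?case
    proof (intro conjI g h \<open>u \<in> U\<close> leI notI)
      assume "4 * g u * h u < k * (a u + b u)\<^sup>2"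
      moreover have "0 \<le> g u" "0 \<le> a u" "0 \<le> b u" using nonneg[OF \<open>u \<in> U\<close>] by auto
      ultimately obtain r s where "r \<in> \<rat>" "s \<in> \<rat>" "0 \<le> s"
        "g u \<le> r" "s \<le> a u" "4 * r * h u < k * (s + b u)\<^sup>2"
        using rational_thresholds_witness[of "g u" "h u" "a u" "b u" k] h k by blast
      then show False using elim \<open>u \<in> U\<close> by (auto simp: P_def Q_def)
    qed
  qed
qed

lemma C2_with_jacobian_continuous_on:
  assumes "C2_with_jacobian U q Dq"
  shows "continuous_on U q"
  using assms has_derivative_continuous
  unfolding C2_with_jacobian_def continuous_on_eq_continuous_within by blast

theorem mainTheorem17:
  fixes U :: "(real^'p) set"
    and \<mu> :: "(real^'p) measure"
    and f :: "nat \<Rightarrow> nat \<Rightarrow> real^'p \<Rightarrow> real"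
    and q :: "nat \<Rightarrow> real^'p \<Rightarrow> real^'p"
    and Dq :: "nat \<Rightarrow> real^'p \<Rightarrow> real^'p^'p"
    and lam_lo lam_hi :: real
  assumes U_compact: "compact U" and U_convex: "convex U"
    and mu_prob: "prob_space \<mu>"
    and mu_sets: "sets \<mu> = sets lborel"
    and mu_ac: "absolutely_continuous lborel \<mu>"
    and mu_support: "measure_support \<mu> = U"
    and f_nonneg: "\<And>d z y. d \<in> {0,1} \<Longrightarrow> z \<in> {0,1} \<Longrightarrow> f d z y \<ge> 0"
    and lam_pos: "0 < lam_lo" and lam_lt: "lam_lo < lam_hi"
    and q_C2: "\<And>d. d \<in> {0,1} \<Longrightarrow> C2_with_jacobian U (q d) (Dq d)"
    and Dq_sym: "\<And>d u. d \<in> {0,1} \<Longrightarrow> u \<in> U \<Longrightarrow> transpose (Dq d u) = Dq d u"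
    and Dq_pd: "\<And>d u x. d \<in> {0,1} \<Longrightarrow> u \<in> U \<Longrightarrow> x \<noteq> 0 \<Longrightarrow> x \<bullet> (Dq d u *v x) > 0"
    and Dq_eig: "\<And>d u c. d \<in> {0,1} \<Longrightarrow> u \<in> U \<Longrightarrow> is_eigenvalue (Dq d u) c
                    \<Longrightarrow> lam_lo < c \<and> c < lam_hi"
    and null_corr: "\<And>d A. d \<in> {0,1} \<Longrightarrow> A \<in> sets \<mu> \<Longrightarrow> A \<subseteq> U \<Longrightarrow>
                    (A \<in> null_sets \<mu> \<longleftrightarrow> q d ` A \<in> null_sets lebesgue)"
    and ineq: "AE y in (lborel :: ((real^'p) \<times> (real^'p)) measure).
                 (fst y \<in> q 0 ` U \<and> snd y \<in> q 1 ` U) \<longrightarrow>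
                 4 * f 0 0 (fst y) * f 1 1 (snd y)
                   > (lam_hi / lam_lo) ^ (CARD('p) + 1) * (f 0 1 (fst y) + f 1 0 (snd y))\<^sup>2"
  shows "AE u in \<mu>. \<forall>\<xi> :: nat \<Rightarrow> real^'p. (\<xi> 0 \<noteq> 0 \<or> \<xi> 1 \<noteq> 0) \<longrightarrow>
           (\<Sum>d\<in>{0,1}. \<Sum>z\<in>{0,1::nat}.
              f d z (q d u) * det (Dq d u) * (\<xi> z \<bullet> (matrix_inv (Dq d u) *v \<xi> d))) > 0"
proof -
  interpret prob_space \<mu> by (rule mu_prob)
  have sets: "sets \<mu> = sets borel" using mu_sets by simp
  have U_borel: "U \<in> sets borel" using U_compact by (simp add: compact_imp_closed)
  have AE_U: "AE u in \<mu>. u \<in> U" using AE_in_measure_support[OF sets] mu_support by simp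
  have null_image: "AE u in \<mu>. u \<notin> X"
    if X: "X \<subseteq> U" "AE y in lborel. y \<notin> q d ` X" and d: "d \<in> {0, 1}" for d X
    by (rule AE_not_in_if_null_image[OF sets U_borel C2_with_jacobian_continuous_on[OF q_C2[OF d]] _ X])
      (simp add: null_corr[OF d])
  have d01: "(0::nat) \<in> {0, 1}" "(1::nat) \<in> {0, 1}" by simp_all
  have "AE u in \<mu>. u \<in> U \<and> 0 < f 0 0 (q 0 u) \<and> 0 < f 1 1 (q 1 u)
          \<and> (lam_hi / lam_lo) ^ (CARD('p) + 1) * (f 0 1 (q 0 u) + f 1 0 (q 1 u))\<^sup>2
            \<le> 4 * f 0 0 (q 0 u) * f 1 1 (q 1 u)"
    using lam_pos lam_lt
    by (intro AE_diagonal_of_AE_rectangles[OF _ _ AE_U]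
        AE_not_in_rectangle_of_null_images[OF ineq
          null_image[OF _ _ d01(1)] null_image[OF _ _ d01(2)]])
      (auto simp: f_nonneg)
  then show ?thesis
  proof eventually_elim
    case (elim u)
    have sym: "transpose (Dq 0 u) = Dq 0 u" "transpose (Dq 1 u) = Dq 1 u"
      using Dq_sym elim by auto
    have eig: "\<And>c. is_eigenvalue (Dq 0 u) c \<Longrightarrow> lam_lo < c \<and> c < lam_hi"
      "\<And>c. is_eigenvalue (Dq 1 u) c \<Longrightarrow> lam_lo < c \<and> c < lam_hi"
      using Dq_eig elim by auto
    show ?case
      using inverse_forms_combination_pos[OF sym lam_pos eig] elim f_nonneg by (auto simp: add.assoc)
  qed
qed

end
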